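(* Let $\mathcal{M}'$ be the set of all square matrices $(a_{i,j})$ of order at least $1$ with entries in $\{0,1\}$ such that: (1) $a_{i,i}=0$ for all $i$; (2) if $a_{i,j}=0$ then $a_{j,i}=1$ (for $i\neq j$); (3) if $a_{i,j}=a_{j,k}=0$ then $a_{i,k}=0$. Call $A,B\in\mathcal{M}'$ equivalent if there is a permutation matrix $E$ with $EAE^{-1}=B$, and let $\mathcal{M}$ be the set of equivalence classes. Then the map sending a nonempty finite $T_0$-space $X$ to the equivalence class of $X_M$ induces a bijection between the set of homeomorphism classes of nonempty finite $T_0$-spaces and $\mathcal{M}$.
   Context: A finite $T_0$-space $X$ is identified with a finite poset via $x\le y$ iff $U_x\subseteq U_y$, where $U_x$ is the intersection of all open sets containing $x$ (conversely, the down-sets of a finite poset form a $T_0$ topology); continuous maps are exactly order-preserving maps. For $X=\{x_1,\dots,x_n\}$ with a fixed labelling, $X_M=(x_{i,j})$ is the $n\times n$ matrix with $x_{i,j}=0$ if $x_i\le x_j$ and $x_{i,j}=1$ otherwise. *)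

theory Defs
  imports "HOL-Analysis.Analysis"
begin

(* Square matrices of order n are represented as functions nat => nat => int,
   only the entries with indices i, j < n being relevant. *)

definition min_open_nbhd :: "'a topology \<Rightarrow> 'a \<Rightarrow> 'a set" where
  "min_open_nbhd X x = \<Inter>{U. openin X U \<and> x \<in> U}"

definition spec_le :: "'a topology \<Rightarrow> 'a \<Rightarrow> 'a \<Rightarrow> bool" where
  "spec_le X x y \<longleftrightarrow> min_open_nbhd X x \<subseteq> min_open_nbhd X y"

definition space_matrix :: "'a topology \<Rightarrow> (nat \<Rightarrow> 'a) \<Rightarrow> nat \<Rightarrow> nat \<Rightarrow> int" where
  "space_matrix X lab i j = (if spec_le X (lab i) (lab j) then 0 else 1)"

definition finite_T0_space :: "'a topology \<Rightarrow> bool" where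
  "finite_T0_space X \<longleftrightarrow> finite (topspace X) \<and> topspace X \<noteq> {} \<and> t0_space X"

definition labelling :: "'a topology \<Rightarrow> (nat \<Rightarrow> 'a) \<Rightarrow> bool" where
  "labelling X lab \<longleftrightarrow> bij_betw lab {..<card (topspace X)} (topspace X)"

definition Mprime :: "(nat \<times> (nat \<Rightarrow> nat \<Rightarrow> int)) set" where
  "Mprime = {(n, A). n \<ge> 1
      \<and> (\<forall>i<n. \<forall>j<n. A i j \<in> {0, 1})
      \<and> (\<forall>i<n. A i i = 0)
      \<and> (\<forall>i<n. \<forall>j<n. i \<noteq> j \<longrightarrow> A i j = 0 \<longrightarrow> A j i = 1)
      \<and> (\<forall>i<n. \<forall>j<n. \<forall>k<n. A i j = 0 \<longrightarrow> A j k = 0 \<longrightarrow> A i k = 0)}"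

definition mat_mult :: "nat \<Rightarrow> (nat \<Rightarrow> nat \<Rightarrow> int) \<Rightarrow> (nat \<Rightarrow> nat \<Rightarrow> int) \<Rightarrow> nat \<Rightarrow> nat \<Rightarrow> int" where
  "mat_mult n A B i j = (\<Sum>k<n. A i k * B k j)"

definition mat_eq :: "nat \<Rightarrow> (nat \<Rightarrow> nat \<Rightarrow> int) \<Rightarrow> (nat \<Rightarrow> nat \<Rightarrow> int) \<Rightarrow> bool" where
  "mat_eq n A B \<longleftrightarrow> (\<forall>i<n. \<forall>j<n. A i j = B i j)"

definition id_mat :: "nat \<Rightarrow> nat \<Rightarrow> int" where
  "id_mat i j = (if i = j then 1 else 0)"

definition perm_matrix :: "nat \<Rightarrow> (nat \<Rightarrow> nat \<Rightarrow> int) \<Rightarrow> bool" where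
  "perm_matrix n E \<longleftrightarrow> (\<forall>i<n. \<forall>j<n. E i j \<in> {0, 1})
      \<and> (\<forall>i<n. \<exists>!j. j < n \<and> E i j = 1)
      \<and> (\<forall>j<n. \<exists>!i. i < n \<and> E i j = 1)"

definition mat_equiv :: "nat \<times> (nat \<Rightarrow> nat \<Rightarrow> int) \<Rightarrow> nat \<times> (nat \<Rightarrow> nat \<Rightarrow> int) \<Rightarrow> bool" where
  "mat_equiv P Q \<longleftrightarrow> fst P = fst Q \<and>
     (\<exists>E Einv. perm_matrix (fst P) E
        \<and> mat_eq (fst P) (mat_mult (fst P) E Einv) id_mat
        \<and> mat_eq (fst P) (mat_mult (fst P) Einv E) id_mat
        \<and> mat_eq (fst P) (mat_mult (fst P) (mat_mult (fst P) E (snd P)) Einv) (snd Q))"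

end

theory Submission
  imports Defs
begin

(* In a finite space the minimal open neighbourhoods U_x are open, so the open sets are exactly
   the down-sets of the specialization preorder and continuous maps are exactly the monotone maps;
   hence finite spaces are homeomorphic iff their preorders are isomorphic. For a T0-space the
   preorder is a partial order, whose complemented incidence matrix is X_M, and conjugating by a
   permutation matrix only relabels the points. Conversely, a matrix in M' is the matrix of the
   down-set topology of the partial order it describes. *)

lemma spec_le_iff: "spec_le X x y \<longleftrightarrow> (\<forall>U. openin X U \<and> y \<in> U \<longrightarrow> x \<in> U)"
  unfolding spec_le_def min_open_nbhd_def by blast

lemma mem_min_open_nbhd_iff: "x \<in> min_open_nbhd X y \<longleftrightarrow> spec_le X x y"
  unfolding spec_le_iff min_open_nbhd_def by blast

lemma spec_le_refl: "spec_le X x x"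
  unfolding spec_le_def by simp

lemma spec_le_trans: "spec_le X x y \<Longrightarrow> spec_le X y z \<Longrightarrow> spec_le X x z"
  unfolding spec_le_def by blast

lemma t0_space_iff_antisymp_on_spec_le:
  "t0_space X \<longleftrightarrow> antisymp_on (topspace X) (spec_le X)"
proof -
  have "(\<exists>U. openin X U \<and> (x \<notin> U \<longleftrightarrow> y \<in> U)) \<longleftrightarrow> \<not> (spec_le X x y \<and> spec_le X y x)" for x y
    unfolding spec_le_iff by blast
  then show ?thesis
    unfolding t0_space_def antisymp_on_def by blast
qed

lemma continuous_map_spec_le:
  assumes "continuous_map X Y f" "x \<in> topspace X" "y \<in> topspace X" "spec_le X x y"
  shows "spec_le Y (f x) (f y)"
  unfolding spec_le_iff
proof (intro allI impI)
  fix V assume "openin Y V \<and> f y \<in> V"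
  then have "openin X {z \<in> topspace X. f z \<in> V}"
    using openin_continuous_map_preimage[OF assms(1)] by blast
  then show "f x \<in> V"
    using assms(2-4) \<open>openin Y V \<and> f y \<in> V\<close> unfolding spec_le_iff by blast
qed

lemma openin_min_open_nbhd:
  assumes "finite (topspace X)" "x \<in> topspace X"
  shows "openin X (min_open_nbhd X x)"
proof -
  have "{U. openin X U \<and> x \<in> U} \<subseteq> Pow (topspace X)"
    using openin_subset by blast
  then have "finite {U. openin X U \<and> x \<in> U}"
    using assms(1) by (meson finite_Pow_iff finite_subset)
  then show ?thesis
    unfolding min_open_nbhd_def using assms(2) by (intro openin_Inter) auto
qed

lemma openin_finite_iff_down_closed:
  assumes "finite (topspace X)"
  shows "openin X U \<longleftrightarrow>
    U \<subseteq> topspace X \<and> (\<forall>y\<in>U. \<forall>x\<in>topspace X. spec_le X x y \<longrightarrow> x \<in> U)"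
proof
  assume U: "openin X U"
  have "x \<in> U" if "y \<in> U" "spec_le X x y" for x y
    using that U unfolding spec_le_iff by blast
  with openin_subset[OF U]
  show "U \<subseteq> topspace X \<and> (\<forall>y\<in>U. \<forall>x\<in>topspace X. spec_le X x y \<longrightarrow> x \<in> U)"
    by blast
next
  assume down: "U \<subseteq> topspace X \<and> (\<forall>y\<in>U. \<forall>x\<in>topspace X. spec_le X x y \<longrightarrow> x \<in> U)"
  then have "U = (\<Union>y\<in>U. topspace X \<inter> min_open_nbhd X y)"
    by (auto simp: mem_min_open_nbhd_iff spec_le_refl)
  moreover have "openin X (\<Union>y\<in>U. topspace X \<inter> min_open_nbhd X y)"
    using down openin_min_open_nbhd[OF assms] by (intro openin_Union) auto
  ultimately show "openin X U"
    by simp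
qed

lemma continuous_map_finite_iff_spec_le_mono:
  assumes "finite (topspace X)"
  shows "continuous_map X Y f \<longleftrightarrow> f ` topspace X \<subseteq> topspace Y \<and>
    (\<forall>x\<in>topspace X. \<forall>y\<in>topspace X. spec_le X x y \<longrightarrow> spec_le Y (f x) (f y))"
    (is "_ \<longleftrightarrow> ?maps \<and> ?mono")
proof
  assume "continuous_map X Y f"
  then show "?maps \<and> ?mono"
    by (simp add: continuous_map_image_subset_topspace continuous_map_spec_le)
next
  assume f: "?maps \<and> ?mono"
  have "openin X {x \<in> topspace X. f x \<in> V}" if V: "openin Y V" for V
  proof -
    have "f x \<in> V" if "x \<in> topspace X" "y \<in> topspace X" "f y \<in> V" "spec_le X x y" for x y
    proof -
      have "spec_le Y (f x) (f y)"
        using f that by blast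
      then show "f x \<in> V"
        using V \<open>f y \<in> V\<close> unfolding spec_le_iff by blast
    qed
    then show ?thesis
      unfolding openin_finite_iff_down_closed[OF assms] by blast
  qed
  with f show "continuous_map X Y f"
    by (simp add: continuous_map)
qed

definition spec_order_iso :: "'a topology \<Rightarrow> 'b topology \<Rightarrow> ('a \<Rightarrow> 'b) \<Rightarrow> bool" where
  "spec_order_iso X Y f \<longleftrightarrow> bij_betw f (topspace X) (topspace Y) \<and>
     (\<forall>x\<in>topspace X. \<forall>y\<in>topspace X. spec_le Y (f x) (f y) \<longleftrightarrow> spec_le X x y)"

lemma homeomorphic_space_finite_iff_spec_order_iso:
  assumes "finite (topspace X)" "finite (topspace Y)"
  shows "X homeomorphic_space Y \<longleftrightarrow> (\<exists>f. spec_order_iso X Y f)"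
proof
  assume "X homeomorphic_space Y"
  then obtain f g where f: "continuous_map X Y f" and g: "continuous_map Y X g"
    and gf: "\<forall>x\<in>topspace X. g (f x) = x" and fg: "\<forall>y\<in>topspace Y. f (g y) = y"
    unfolding homeomorphic_space_def homeomorphic_maps_def by blast
  have f_into: "f ` topspace X \<subseteq> topspace Y" and g_into: "g ` topspace Y \<subseteq> topspace X"
    using f g by (simp_all add: continuous_map_image_subset_topspace)
  have "spec_le Y (f x) (f y) \<longleftrightarrow> spec_le X x y"
    if "x \<in> topspace X" "y \<in> topspace X" for x y
  proof
    assume "spec_le Y (f x) (f y)"
    then have "spec_le X (g (f x)) (g (f y))"
      using g f_into that by (simp add: continuous_map_spec_le image_subset_iff)
    then show "spec_le X x y"
      using gf that by simp
  next
    assume "spec_le X x y"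
    then show "spec_le Y (f x) (f y)"
      using f that by (simp add: continuous_map_spec_le)
  qed
  moreover have "bij_betw f (topspace X) (topspace Y)"
    using gf fg f_into g_into by (rule bij_betw_byWitness)
  ultimately show "\<exists>f. spec_order_iso X Y f"
    unfolding spec_order_iso_def by blast
next
  assume "\<exists>f. spec_order_iso X Y f"
  then obtain f where f: "bij_betw f (topspace X) (topspace Y)"
    and iso: "\<forall>x\<in>topspace X. \<forall>y\<in>topspace X. spec_le Y (f x) (f y) \<longleftrightarrow> spec_le X x y"
    unfolding spec_order_iso_def by blast
  define g where "g = inv_into (topspace X) f"
  have g_into: "g ` topspace Y \<subseteq> topspace X"
    unfolding g_def using f by (simp add: bij_betw_def image_subset_iff inv_into_into)
  have gf: "\<forall>x\<in>topspace X. g (f x) = x"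
    unfolding g_def using f by (simp add: bij_betw_inv_into_left)
  have fg: "\<forall>y\<in>topspace Y. f (g y) = y"
    unfolding g_def using f by (simp add: bij_betw_inv_into_right)
  have "continuous_map X Y f"
    unfolding continuous_map_finite_iff_spec_le_mono[OF assms(1)]
    using f iso by (simp add: bij_betw_def)
  moreover have "spec_le X (g x) (g y)" if "x \<in> topspace Y" "y \<in> topspace Y" "spec_le Y x y" for x y
    using iso[rule_format, of "g x" "g y"] g_into fg that by (auto simp: image_subset_iff)
  then have "continuous_map Y X g"
    unfolding continuous_map_finite_iff_spec_le_mono[OF assms(2)] using g_into by blast
  ultimately show "X homeomorphic_space Y"
    unfolding homeomorphic_space_def homeomorphic_maps_def using gf fg by blast
qed

definition down_set_topology :: "'a set \<Rightarrow> ('a \<Rightarrow> 'a \<Rightarrow> bool) \<Rightarrow> 'a topology" where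
  "down_set_topology S R = topology (\<lambda>U. U \<subseteq> S \<and> (\<forall>y\<in>U. \<forall>x\<in>S. R x y \<longrightarrow> x \<in> U))"

lemma openin_down_set_topology:
  "openin (down_set_topology S R) U \<longleftrightarrow> U \<subseteq> S \<and> (\<forall>y\<in>U. \<forall>x\<in>S. R x y \<longrightarrow> x \<in> U)"
proof -
  have "istopology (\<lambda>U. U \<subseteq> S \<and> (\<forall>y\<in>U. \<forall>x\<in>S. R x y \<longrightarrow> x \<in> U))"
    unfolding istopology_def by blast
  then show ?thesis
    unfolding down_set_topology_def by simp
qed

lemma topspace_down_set_topology: "topspace (down_set_topology S R) = S"
  unfolding topspace_def openin_down_set_topology by blast

lemma spec_le_down_set_topology:
  assumes "reflp_on S R" "transp_on S R" "x \<in> S" "y \<in> S"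
  shows "spec_le (down_set_topology S R) x y \<longleftrightarrow> R x y"
proof
  assume "spec_le (down_set_topology S R) x y"
  moreover have "openin (down_set_topology S R) {z \<in> S. R z y}"
    using assms(2,4) unfolding openin_down_set_topology transp_on_def by blast
  ultimately show "R x y"
    using assms(1,3,4) unfolding spec_le_iff reflp_on_def by blast
next
  assume "R x y"
  then show "spec_le (down_set_topology S R) x y"
    using assms(3) unfolding spec_le_iff openin_down_set_topology by blast
qed

definition perm_mat :: "(nat \<Rightarrow> nat) \<Rightarrow> nat \<Rightarrow> nat \<Rightarrow> int" where
  "perm_mat \<sigma> i j = of_bool (j = \<sigma> i)"

definition transpose_mat :: "(nat \<Rightarrow> nat \<Rightarrow> 'a) \<Rightarrow> nat \<Rightarrow> nat \<Rightarrow> 'a" where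
  "transpose_mat A i j = A j i"

lemma mat_mult_perm_mat_left:
  assumes "\<sigma> i < n"
  shows "mat_mult n (perm_mat \<sigma>) A i j = A (\<sigma> i) j"
  using assms by (simp add: mat_mult_def perm_mat_def)

lemma mat_mult_transpose_perm_mat_right:
  assumes "\<sigma> j < n"
  shows "mat_mult n A (transpose_mat (perm_mat \<sigma>)) i j = A i (\<sigma> j)"
  using assms by (simp add: mat_mult_def transpose_mat_def perm_mat_def)

lemma mat_mult_cong:
  assumes "mat_eq n A A'" "mat_eq n B B'" "i < n" "j < n"
  shows "mat_mult n A B i j = mat_mult n A' B' i j"
  using assms unfolding mat_mult_def mat_eq_def by (intro sum.cong) auto

lemma mat_mult_transpose_perm_mat_perm_mat:
  assumes \<sigma>: "bij_betw \<sigma> {..<n} {..<n}" and "i < n" "j < n"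
  shows "mat_mult n (transpose_mat (perm_mat \<sigma>)) (perm_mat \<sigma>) i j = id_mat i j"
proof -
  have "mat_mult n (transpose_mat (perm_mat \<sigma>)) (perm_mat \<sigma>) i j
      = (\<Sum>k<n. of_bool (i = \<sigma> k) * of_bool (j = \<sigma> k))"
    by (simp add: mat_mult_def transpose_mat_def perm_mat_def)
  also have "\<dots> = (\<Sum>l<n. of_bool (i = l) * of_bool (j = l))"
    using sum.reindex_bij_betw[OF \<sigma>, of "\<lambda>l. of_bool (i = l) * of_bool (j = l) :: int"] .
  also have "\<dots> = id_mat i j"
    using assms by (simp add: id_mat_def)
  finally show ?thesis .
qed

lemma perm_matrix_perm_mat:
  assumes \<sigma>: "bij_betw \<sigma> {..<n} {..<n}"
  shows "perm_matrix n (perm_mat \<sigma>)"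
  unfolding perm_matrix_def
proof (intro conjI allI impI)
  fix j assume "j < n"
  then obtain k where "k < n" "\<sigma> k = j"
    using \<sigma> by (metis bij_betw_def imageE lessThan_iff)
  then show "\<exists>!i. i < n \<and> perm_mat \<sigma> i j = 1"
    using \<sigma> by (intro ex1I[of _ k]) (auto simp: perm_mat_def bij_betw_def inj_on_def)
qed (use \<sigma> in \<open>auto simp: perm_mat_def bij_betw_def\<close>)

lemma perm_matrix_obtains_perm:
  assumes "perm_matrix n E"
  obtains \<sigma> where "bij_betw \<sigma> {..<n} {..<n}" "mat_eq n E (perm_mat \<sigma>)"
proof
  have entries: "\<forall>i<n. \<forall>j<n. E i j \<in> {0, 1}"
    and rows: "\<forall>i<n. \<exists>!j. j < n \<and> E i j = 1"
    and cols: "\<forall>j<n. \<exists>!i. i < n \<and> E i j = 1"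
    using assms unfolding perm_matrix_def by simp_all
  define \<sigma> where "\<sigma> i = (THE j. j < n \<and> E i j = 1)" for i
  have row: "\<sigma> i < n \<and> E i (\<sigma> i) = 1" if "i < n" for i
    unfolding \<sigma>_def using theI'[OF rows[rule_format, OF that]] .
  show "mat_eq n E (perm_mat \<sigma>)"
    unfolding mat_eq_def perm_mat_def
  proof (intro allI impI)
    fix i j assume ij: "i < n" "j < n"
    have "E i j = 1 \<longleftrightarrow> j = \<sigma> i"
      using row[OF ij(1)] ij(2) the1_equality[OF rows[rule_format, OF ij(1)]] unfolding \<sigma>_def by blast
    then show "E i j = of_bool (j = \<sigma> i)"
      using entries ij by auto
  qed
  have "inj_on \<sigma> {..<n}"
  proof (rule inj_onI)
    fix i i' assume "i \<in> {..<n}" "i' \<in> {..<n}" "\<sigma> i = \<sigma> i'"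
    then have "i < n \<and> E i (\<sigma> i) = 1" "i' < n \<and> E i' (\<sigma> i) = 1"
      using row[of i] row[of i'] by auto
    then show "i = i'"
      using cols row[of i] by blast
  qed
  moreover have "\<sigma> ` {..<n} \<subseteq> {..<n}"
    using row by auto
  ultimately show "bij_betw \<sigma> {..<n} {..<n}"
    by (simp add: bij_betw_def card_image card_subset_eq)
qed

lemma right_inverse_perm_mat_eq_transpose:
  assumes \<sigma>: "bij_betw \<sigma> {..<n} {..<n}" and F: "mat_eq n (mat_mult n (perm_mat \<sigma>) F) id_mat"
  shows "mat_eq n F (transpose_mat (perm_mat \<sigma>))"
  unfolding mat_eq_def
proof (intro allI impI)
  fix l j assume "l < n" "j < n"
  then obtain i where i: "i < n" "l = \<sigma> i"
    using \<sigma> by (metis bij_betw_def imageE lessThan_iff)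
  have "F l j = mat_mult n (perm_mat \<sigma>) F i j"
    using i \<open>l < n\<close> by (simp add: mat_mult_perm_mat_left)
  also have "\<dots> = id_mat i j"
    using F i \<open>j < n\<close> by (simp add: mat_eq_def)
  also have "\<dots> = transpose_mat (perm_mat \<sigma>) l j"
    using \<sigma> i \<open>j < n\<close> by (auto simp: id_mat_def transpose_mat_def perm_mat_def bij_betw_def inj_on_def)
  finally show "F l j = transpose_mat (perm_mat \<sigma>) l j" .
qed

lemma mat_equiv_permuted:
  assumes \<sigma>: "bij_betw \<sigma> {..<n} {..<n}" and B: "\<forall>i<n. \<forall>j<n. B i j = A (\<sigma> i) (\<sigma> j)"
  shows "mat_equiv (n, A) (n, B)"
proof -
  have \<sigma>_less: "\<sigma> i < n" if "i < n" for i
    using \<sigma> that by (auto simp: bij_betw_def)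
  have "mat_eq n (mat_mult n (perm_mat \<sigma>) (transpose_mat (perm_mat \<sigma>))) id_mat"
    using \<sigma> \<sigma>_less
    by (auto simp: mat_eq_def mat_mult_perm_mat_left transpose_mat_def perm_mat_def id_mat_def
        bij_betw_def inj_on_def)
  moreover have "mat_eq n (mat_mult n (transpose_mat (perm_mat \<sigma>)) (perm_mat \<sigma>)) id_mat"
    using mat_mult_transpose_perm_mat_perm_mat[OF \<sigma>] by (simp add: mat_eq_def)
  moreover have "mat_eq n (mat_mult n (mat_mult n (perm_mat \<sigma>) A) (transpose_mat (perm_mat \<sigma>))) B"
    using B \<sigma>_less by (simp add: mat_eq_def mat_mult_transpose_perm_mat_right mat_mult_perm_mat_left)
  ultimately show ?thesis
    using perm_matrix_perm_mat[OF \<sigma>] unfolding mat_equiv_def by auto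
qed

lemma mat_equiv_iff_permuted:
  "mat_equiv (n, A) (m, B) \<longleftrightarrow>
     n = m \<and> (\<exists>\<sigma>. bij_betw \<sigma> {..<n} {..<n} \<and> (\<forall>i<n. \<forall>j<n. B i j = A (\<sigma> i) (\<sigma> j)))"
proof
  assume "mat_equiv (n, A) (m, B)"
  then obtain E Einv where nm: "n = m" and E: "perm_matrix n E"
    and right_inv: "mat_eq n (mat_mult n E Einv) id_mat"
    and conj: "mat_eq n (mat_mult n (mat_mult n E A) Einv) B"
    unfolding mat_equiv_def by auto
  obtain \<sigma> where \<sigma>: "bij_betw \<sigma> {..<n} {..<n}" and E_eq: "mat_eq n E (perm_mat \<sigma>)"
    using perm_matrix_obtains_perm[OF E] .
  have \<sigma>_less: "\<sigma> i < n" if "i < n" for i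
    using \<sigma> that by (auto simp: bij_betw_def)
  have "mat_eq n (mat_mult n (perm_mat \<sigma>) Einv) id_mat"
    using right_inv mat_mult_cong[OF E_eq, of Einv Einv] by (simp add: mat_eq_def)
  then have Einv_eq: "mat_eq n Einv (transpose_mat (perm_mat \<sigma>))"
    by (rule right_inverse_perm_mat_eq_transpose[OF \<sigma>])
  have EA_eq: "mat_eq n (mat_mult n E A) (mat_mult n (perm_mat \<sigma>) A)"
    using mat_mult_cong[OF E_eq] by (simp add: mat_eq_def)
  have "B i j = A (\<sigma> i) (\<sigma> j)" if "i < n" "j < n" for i j
    using conj mat_mult_cong[OF EA_eq Einv_eq that] that \<sigma>_less
    by (simp add: mat_eq_def mat_mult_transpose_perm_mat_right mat_mult_perm_mat_left)
  with nm \<sigma> show "n = m \<and> (\<exists>\<sigma>. bij_betw \<sigma> {..<n} {..<n} \<and> (\<forall>i<n. \<forall>j<n. B i j = A (\<sigma> i) (\<sigma> j)))"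
    by blast
qed (auto intro: mat_equiv_permuted)

lemma ex_perm_iff_ex_bij_betw_relabel:
  assumes a: "bij_betw a {..<n} S" and b: "bij_betw b {..<n} T"
  shows "(\<exists>\<sigma>. bij_betw \<sigma> {..<n} {..<n} \<and>
            (\<forall>i<n. \<forall>j<n. R (a (\<sigma> i)) (a (\<sigma> j)) \<longleftrightarrow> Q (b i) (b j)))
     \<longleftrightarrow> (\<exists>f. bij_betw f T S \<and> (\<forall>x\<in>T. \<forall>y\<in>T. R (f x) (f y) \<longleftrightarrow> Q x y))"
proof
  assume "\<exists>\<sigma>. bij_betw \<sigma> {..<n} {..<n} \<and>
            (\<forall>i<n. \<forall>j<n. R (a (\<sigma> i)) (a (\<sigma> j)) \<longleftrightarrow> Q (b i) (b j))"
  then obtain \<sigma> where \<sigma>: "bij_betw \<sigma> {..<n} {..<n}"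
    and iso: "\<forall>i<n. \<forall>j<n. R (a (\<sigma> i)) (a (\<sigma> j)) \<longleftrightarrow> Q (b i) (b j)"
    by blast
  define f where "f = a \<circ> \<sigma> \<circ> inv_into {..<n} b"
  have "bij_betw f T S"
    unfolding f_def using bij_betw_trans[OF bij_betw_inv_into[OF b] bij_betw_trans[OF \<sigma> a]]
    by (simp add: comp_assoc)
  moreover have "R (f x) (f y) \<longleftrightarrow> Q x y" if "x \<in> T" "y \<in> T" for x y
  proof -
    have "inv_into {..<n} b x < n" "inv_into {..<n} b y < n"
      using b that by (auto simp: bij_betw_def inv_into_into)
    then show ?thesis
      using iso that b by (simp add: f_def bij_betw_inv_into_right)
  qed
  ultimately show "\<exists>f. bij_betw f T S \<and> (\<forall>x\<in>T. \<forall>y\<in>T. R (f x) (f y) \<longleftrightarrow> Q x y)"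
    by blast
next
  assume "\<exists>f. bij_betw f T S \<and> (\<forall>x\<in>T. \<forall>y\<in>T. R (f x) (f y) \<longleftrightarrow> Q x y)"
  then obtain f where f: "bij_betw f T S" and iso: "\<forall>x\<in>T. \<forall>y\<in>T. R (f x) (f y) \<longleftrightarrow> Q x y"
    by blast
  define \<sigma> where "\<sigma> = inv_into {..<n} a \<circ> f \<circ> b"
  have "bij_betw \<sigma> {..<n} {..<n}"
    unfolding \<sigma>_def using bij_betw_trans[OF bij_betw_trans[OF b f] bij_betw_inv_into[OF a]]
    by (simp add: comp_assoc)
  moreover have "a (\<sigma> i) = f (b i)" if "i < n" for i
  proof -
    have "f (b i) \<in> S"
      using b f that by (auto simp: bij_betw_def)
    then show ?thesis
      using a by (simp add: \<sigma>_def bij_betw_inv_into_right)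
  qed
  then have "R (a (\<sigma> i)) (a (\<sigma> j)) \<longleftrightarrow> Q (b i) (b j)" if "i < n" "j < n" for i j
    using iso b that by (auto simp: bij_betw_def)
  ultimately show "\<exists>\<sigma>. bij_betw \<sigma> {..<n} {..<n} \<and>
      (\<forall>i<n. \<forall>j<n. R (a (\<sigma> i)) (a (\<sigma> j)) \<longleftrightarrow> Q (b i) (b j))"
    by blast
qed

lemma space_matrix_eq_0_iff: "space_matrix X lab i j = 0 \<longleftrightarrow> spec_le X (lab i) (lab j)"
  by (simp add: space_matrix_def)

lemma space_matrix_in_Mprime:
  assumes X: "finite_T0_space X" and lab: "labelling X lab"
  shows "(card (topspace X), space_matrix X lab) \<in> Mprime"
proof -
  have lab_bij: "bij_betw lab {..<card (topspace X)} (topspace X)"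
    using lab unfolding labelling_def .
  have "card (topspace X) \<ge> 1"
    using X unfolding finite_T0_space_def by (simp add: Suc_le_eq card_gt_0_iff)
  moreover have "space_matrix X lab j i = 1"
    if "i < card (topspace X)" "j < card (topspace X)" "i \<noteq> j" "space_matrix X lab i j = 0" for i j
  proof -
    have "lab i \<noteq> lab j" "lab i \<in> topspace X" "lab j \<in> topspace X"
      using lab_bij that by (auto simp: bij_betw_def inj_on_def)
    moreover have "antisymp_on (topspace X) (spec_le X)"
      using X by (simp add: finite_T0_space_def t0_space_iff_antisymp_on_spec_le)
    moreover have "spec_le X (lab i) (lab j)"
      using that by (simp add: space_matrix_eq_0_iff)
    ultimately have "\<not> spec_le X (lab j) (lab i)"
      by (metis antisymp_onD)
    then show ?thesis
      by (simp add: space_matrix_def)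
  qed
  ultimately show ?thesis
    unfolding Mprime_def
    by (auto simp: space_matrix_def spec_le_refl dest: spec_le_trans)
qed

lemma mat_equiv_space_matrix_iff_spec_order_iso:
  assumes X: "labelling X labX" and Y: "labelling Y labY"
  shows "mat_equiv (card (topspace X), space_matrix X labX) (card (topspace Y), space_matrix Y labY)
    \<longleftrightarrow> (\<exists>f. spec_order_iso Y X f)"
proof (cases "card (topspace X) = card (topspace Y)")
  case True
  define n where "n = card (topspace Y)"
  have entry_iff: "space_matrix Y labY i j = space_matrix X labX k l \<longleftrightarrow>
      (spec_le X (labX k) (labX l) \<longleftrightarrow> spec_le Y (labY i) (labY j))" for i j k l
    by (simp add: space_matrix_def)
  have "mat_equiv (card (topspace X), space_matrix X labX) (card (topspace Y), space_matrix Y labY)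
    \<longleftrightarrow> (\<exists>\<sigma>. bij_betw \<sigma> {..<n} {..<n} \<and>
          (\<forall>i<n. \<forall>j<n. spec_le X (labX (\<sigma> i)) (labX (\<sigma> j)) \<longleftrightarrow> spec_le Y (labY i) (labY j)))"
    unfolding mat_equiv_iff_permuted entry_iff True n_def by simp
  also have "\<dots> \<longleftrightarrow> (\<exists>f. spec_order_iso Y X f)"
    unfolding spec_order_iso_def
  proof (rule ex_perm_iff_ex_bij_betw_relabel)
    show "bij_betw labX {..<n} (topspace X)" "bij_betw labY {..<n} (topspace Y)"
      using X Y True unfolding labelling_def n_def by simp_all
  qed
  finally show ?thesis .
next
  case False
  then have "\<not> (\<exists>f. spec_order_iso Y X f)"
    unfolding spec_order_iso_def by (metis bij_betw_same_card)
  with False show ?thesis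
    by (simp add: mat_equiv_iff_permuted)
qed

lemma Mprime_realised_by_finite_T0_space:
  assumes "A \<in> Mprime"
  shows "\<exists>(X :: nat topology) lab. finite_T0_space X \<and> labelling X lab \<and>
    mat_equiv (card (topspace X), space_matrix X lab) A"
proof -
  obtain n M where A: "A = (n, M)"
    by (cases A)
  define R where "R i j \<longleftrightarrow> M i j = 0" for i j
  define X where "X = down_set_topology {..<n} R"
  have topX: "topspace X = {..<n}"
    unfolding X_def by (rule topspace_down_set_topology)
  have "n \<ge> 1" and entries: "\<forall>i<n. \<forall>j<n. M i j \<in> {0, 1}"
    and diag: "\<forall>i<n. M i i = 0"
    and asym: "\<forall>i<n. \<forall>j<n. i \<noteq> j \<longrightarrow> M i j = 0 \<longrightarrow> M j i = 1"
    and trans: "\<forall>i<n. \<forall>j<n. \<forall>k<n. M i j = 0 \<longrightarrow> M j k = 0 \<longrightarrow> M i k = 0"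
    using assms unfolding A Mprime_def mem_Collect_eq case_prod_conv by blast+
  have "reflp_on {..<n} R"
    using diag unfolding R_def reflp_on_def by simp
  moreover have "transp_on {..<n} R"
    using trans unfolding R_def transp_on_def by blast
  ultimately have spec: "spec_le X i j \<longleftrightarrow> R i j" if "i < n" "j < n" for i j
    unfolding X_def using that by (simp add: spec_le_down_set_topology)
  have "antisymp_on (topspace X) (spec_le X)"
    using asym spec unfolding topX antisymp_on_def R_def by force
  then have "finite_T0_space X"
    using \<open>n \<ge> 1\<close> by (simp add: finite_T0_space_def t0_space_iff_antisymp_on_spec_le topX lessThan_empty_iff)
  moreover have "labelling X id"
    by (simp add: labelling_def topX)
  moreover have "mat_equiv (card (topspace X), space_matrix X id) A"
    unfolding mat_equiv_iff_permuted A topX card_lessThan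
  proof (intro conjI exI[of _ id])
    show "\<forall>i<n. \<forall>j<n. M i j = space_matrix X id (id i) (id j)"
      using entries spec by (auto simp: space_matrix_def R_def)
  qed simp_all
  ultimately show ?thesis
    by blast
qed

theorem mainTheorem1:
  shows
   \<comment> \<open>the matrix of any labelled nonempty finite T0-space lies in M'\<close>
   "(\<forall>(X :: 'a topology) lab. finite_T0_space X \<and> labelling X lab \<longrightarrow>
        (card (topspace X), space_matrix X lab) \<in> Mprime)
   \<comment> \<open>well-defined and injective on homeomorphism classes\<close>
   \<and> (\<forall>(X :: 'a topology) (Y :: 'b topology) labX labY.
        finite_T0_space X \<and> finite_T0_space Y \<and> labelling X labX \<and> labelling Y labY \<longrightarrow>
        (X homeomorphic_space Y \<longleftrightarrow>
         mat_equiv (card (topspace X), space_matrix X labX) (card (topspace Y), space_matrix Y labY)))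
   \<comment> \<open>surjective onto M\<close>
   \<and> (\<forall>A \<in> Mprime. \<exists>(X :: nat topology) lab. finite_T0_space X \<and> labelling X lab \<and>
        mat_equiv (card (topspace X), space_matrix X lab) A)"
proof (intro conjI allI impI ballI)
  fix X :: "'a topology" and lab
  assume "finite_T0_space X \<and> labelling X lab"
  then show "(card (topspace X), space_matrix X lab) \<in> Mprime"
    using space_matrix_in_Mprime by blast
next
  fix X :: "'a topology" and Y :: "'b topology" and labX labY
  assume spaces: "finite_T0_space X \<and> finite_T0_space Y \<and> labelling X labX \<and> labelling Y labY"
  have "X homeomorphic_space Y \<longleftrightarrow> Y homeomorphic_space X"
    by (rule homeomorphic_space_sym)
  also have "\<dots> \<longleftrightarrow> (\<exists>f. spec_order_iso Y X f)"
    using spaces by (intro homeomorphic_space_finite_iff_spec_order_iso) (simp_all add: finite_T0_space_def)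
  also have "\<dots> \<longleftrightarrow>
      mat_equiv (card (topspace X), space_matrix X labX) (card (topspace Y), space_matrix Y labY)"
    using spaces by (intro mat_equiv_space_matrix_iff_spec_order_iso[symmetric]) simp_all
  finally show "X homeomorphic_space Y \<longleftrightarrow>
      mat_equiv (card (topspace X), space_matrix X labX) (card (topspace Y), space_matrix Y labY)" .
next
  fix A
  assume "A \<in> Mprime"
  then show "\<exists>(X :: nat topology) lab. finite_T0_space X \<and> labelling X lab \<and>
      mat_equiv (card (topspace X), space_matrix X lab) A"
    by (rule Mprime_realised_by_finite_T0_space)
qed

end
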